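(* Let $d,\ell,s,m\in\mathbb{N}$ with $d\ge\ell$, let $T\subseteq\mathbb{F}$ be a subset of size $n$, and let $r=s-\lfloor\frac{d-\ell}{n}\rfloor$. Let $Q,R\in\mathbb{F}[x]$ be univariate polynomials of degree at most $\ell$, and let $h\colon T\to\mathbb{F}_{<r}[z]$ and $w\colon T\times[r]\to\mathbb{Z}_{\ge0}$ be functions such that $w(a,i)\le\frac{n^{m-1}}{2}\big((s-i)-\frac{d-\ell}{n}\big)$ for every $(a,i)\in T\times[r]$. If $Q\ne R$, then \[\Gamma^{s,d,\ell}_w(h,Q)+\Gamma^{s,d,\ell}_w(h,R)\ge n^m\Big(s-\frac dn\Big).\]
   Context: $\mathbb{F}$ is a field and $[r]=\{0,\dots,r-1\}$. For $i\in[r+1]$, $A_i(h,R)=\{a\in T:\max\{j\in[r+1]:h(a)\equiv R(a+z)\bmod\langle z\rangle^j\}=i\}$, and \[\Gamma^{s,d,\ell}_w(h,R)=\sum_{i=0}^{r-1}\sum_{a\in A_i(h,R)}\max\Big\{n^{m-1}\Big((s-i)-\tfrac{d-\ell}{n}\Big)-w(a,i),\max_{j<i}w(a,j)\Big\}+\sum_{a\in A_r(h,R)}\max_{j<r}w(a,j)\] (maxima over empty sets ignored). *)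

theory Defs
  imports Complex_Main "HOL-Computational_Algebra.Polynomial"
begin

definition agree_order :: "('a::field \<Rightarrow> 'a poly) \<Rightarrow> 'a poly \<Rightarrow> nat \<Rightarrow> 'a \<Rightarrow> nat" where
  "agree_order h R r a = Max {j. j \<le> r \<and> monom 1 j dvd (h a - pcompose R [:a, 1:])}"

definition A_set :: "'a::field set \<Rightarrow> ('a \<Rightarrow> 'a poly) \<Rightarrow> 'a poly \<Rightarrow> nat \<Rightarrow> nat \<Rightarrow> 'a set" where
  "A_set T h R r i = {a \<in> T. agree_order h R r a = i}"

text \<open>Gamma^{s,d,l}_w(h,R), with n = card T and r given as an integer
  (only nonnegative r gives nonempty index ranges). Maxima over empty sets are ignored.\<close>
definition Gamma :: "'a::field set \<Rightarrow> nat \<Rightarrow> nat \<Rightarrow> nat \<Rightarrow> nat \<Rightarrow> int \<Rightarrow>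
    ('a \<Rightarrow> nat \<Rightarrow> nat) \<Rightarrow> ('a \<Rightarrow> 'a poly) \<Rightarrow> 'a poly \<Rightarrow> real" where
  "Gamma T m s d l r w h R =
     (let n = card T; rr = nat r in
       (\<Sum>i<rr. \<Sum>a\<in>A_set T h R rr i.
          (let X = real n powi (int m - 1) * ((real s - real i) - (real d - real l) / real n)
                   - real (w a i)
           in if i = 0 then X else max X (real (Max {w a j | j. j < i}))))
       + (if rr > 0 then (\<Sum>a\<in>A_set T h R rr rr. real (Max {w a j | j. j < rr})) else 0))"

end

theory Submission
  imports Defs
begin

text \<open>Write \<open>N = n\<^sup>m\<^sup>-\<^sup>1\<close> and \<open>\<delta> = (d - l)/n\<close>. At a point \<open>a \<in> T\<close> where \<open>h\<close> agrees with
  \<open>Q(a + z)\<close> to order \<open>i\<close> and with \<open>R(a + z)\<close> to order \<open>j\<close>, the summands of the two \<open>\<Gamma>\<close>'s add up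
  to at least \<open>N ((s - min i j) - \<delta>)\<close>: if \<open>i < j\<close>, the weight \<open>w(a,i)\<close> subtracted in the first
  is recovered through the maximum in the second; if \<open>i = j < r\<close>, the hypothesis
  \<open>2 w(a,i) \<le> N ((s - i) - \<delta>)\<close> absorbs it; and if \<open>i = j = r\<close>, the bound is nonpositive
  because \<open>s - r \<le> \<delta>\<close>. On the other hand the power \<open>z\<close> to the \<open>min i j\<close> divides \<open>(Q - R)(a + z)\<close>,
  so \<open>min i j\<close> is at most the multiplicity of \<open>a\<close> as a root of \<open>Q - R \<noteq> 0\<close>, and these
  multiplicities add up to at most \<open>deg (Q - R) \<le> l\<close>. Summing over \<open>T\<close> gives at least
  \<open>n N (s - \<delta>) - N l = n\<^sup>m (s - d/n)\<close>.\<close>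

lemma sum_count_le_size: "finite T \<Longrightarrow> (\<Sum>a\<in>T. count M a) \<le> size M"
proof (induction M)
  case empty
  then show ?case by simp
next
  case (add x M)
  have "(\<Sum>a\<in>T. count (add_mset x M) a) = (\<Sum>a\<in>T. count M a + (if a = x then 1 else 0))"
    by (intro sum.cong) auto
  also have "\<dots> = (\<Sum>a\<in>T. count M a) + (if x \<in> T then 1 else 0)"
    using add.prems by (simp add: sum.distrib)
  finally show ?case using add by auto
qed

lemma sum_order_le_degree:
  fixes p :: "'a::idom poly"
  assumes "p \<noteq> 0" "finite T"
  shows "(\<Sum>a\<in>T. order a p) \<le> degree p"
proof -
  have "(\<Sum>a\<in>T. order a p) = (\<Sum>a\<in>T. count (proots p) a)"
    using assms by simp
  also have "\<dots> \<le> size (proots p)"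
    using assms(2) by (rule sum_count_le_size)
  also have "\<dots> \<le> degree p"
    by (rule size_proots_le)
  finally show ?thesis .
qed

lemma pcompose_monom_1: "pcompose (monom 1 k) q = q ^ k"
  by (induction k) (simp_all add: monom_altdef pcompose_mult pcompose_pCons pcompose_1)

lemma order_ge_if_monom_dvd_pcompose:
  fixes p :: "'a::idom poly"
  assumes "p \<noteq> 0" "monom 1 k dvd pcompose p [:a, 1:]"
  shows "k \<le> order a p"
proof -
  obtain c where c: "pcompose p [:a, 1:] = monom 1 k * c"
    using assms(2) by (elim dvdE)
  have "p = pcompose (pcompose p [:a, 1:]) [:-a, 1:]"
    by (simp add: pcompose_assoc[symmetric] pcompose_pCons)
  also have "\<dots> = [:-a, 1:] ^ k * pcompose c [:-a, 1:]"
    by (simp add: c pcompose_mult pcompose_monom_1)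
  finally have "[:-a, 1:] ^ k dvd p"
    by (metis dvd_triv_left)
  then show ?thesis
    using assms(1) by (simp add: order_divides)
qed

lemma agree_order_le: "agree_order h P r a \<le> r"
  and monom_agree_order_dvd: "monom 1 (agree_order h P r a) dvd (h a - pcompose P [:a, 1:])"
proof -
  let ?S = "{j. j \<le> r \<and> monom 1 j dvd (h a - pcompose P [:a, 1:])}"
  have "finite ?S"
    by (rule finite_subset[of _ "{..r}"]) auto
  moreover have "0 \<in> ?S"
    by (simp add: monom_0 one_pCons[symmetric])
  ultimately have "Max ?S \<in> ?S"
    by (intro Max_in) auto
  then show "agree_order h P r a \<le> r" "monom 1 (agree_order h P r a) dvd (h a - pcompose P [:a, 1:])"
    unfolding agree_order_def by simp_all
qed

lemma min_agree_order_le_order: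
  assumes "Q \<noteq> R"
  shows "min (agree_order h Q r a) (agree_order h R r a) \<le> order a (Q - R)"
proof -
  let ?k = "min (agree_order h Q r a) (agree_order h R r a)"
  have monom_dvd: "monom 1 ?k dvd monom 1 (agree_order h P r a)" if "P \<in> {Q, R}" for P
    using that by (auto simp: monom_altdef intro: le_imp_power_dvd)
  have dvd_shift: "monom 1 ?k dvd (h a - pcompose P [:a, 1:])" if "P \<in> {Q, R}" for P
    using monom_dvd[OF that] monom_agree_order_dvd by (rule dvd_trans)
  have "monom 1 ?k dvd (h a - pcompose R [:a, 1:]) - (h a - pcompose Q [:a, 1:])"
    by (intro dvd_diff dvd_shift) simp_all
  then have "monom 1 ?k dvd pcompose (Q - R) [:a, 1:]"
    by (simp add: pcompose_diff)
  then show ?thesis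
    using assms by (intro order_ge_if_monom_dvd_pcompose) auto
qed

lemma sum_min_agree_order_le_degree:
  assumes "finite T" "Q \<noteq> R"
  shows "(\<Sum>a\<in>T. min (agree_order h Q r a) (agree_order h R r a)) \<le> degree (Q - R)"
proof -
  have "(\<Sum>a\<in>T. min (agree_order h Q r a) (agree_order h R r a)) \<le> (\<Sum>a\<in>T. order a (Q - R))"
    using assms(2) by (intro sum_mono min_agree_order_le_order)
  also have "\<dots> \<le> degree (Q - R)"
    using assms by (intro sum_order_le_degree) auto
  finally show ?thesis .
qed

definition Gamma_summand :: "real \<Rightarrow> real \<Rightarrow> nat \<Rightarrow> nat \<Rightarrow> (nat \<Rightarrow> nat) \<Rightarrow> nat \<Rightarrow> real" where
  "Gamma_summand N \<delta> s r w i =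
     (if i < r then
        (let X = N * ((real s - real i) - \<delta>) - real (w i)
         in if i = 0 then X else max X (real (Max {w j | j. j < i})))
      else real (Max {w j | j. j < r}))"

context
  fixes N \<delta> :: real and s r :: nat and w :: "nat \<Rightarrow> nat"
begin

lemma Gamma_summand_ge_diff:
  "i < r \<Longrightarrow> Gamma_summand N \<delta> s r w i \<ge> N * ((real s - real i) - \<delta>) - real (w i)"
  by (simp add: Gamma_summand_def Let_def)

lemma Gamma_summand_ge_weight:
  assumes "k < i" "i \<le> r"
  shows "Gamma_summand N \<delta> s r w i \<ge> real (w k)"
proof -
  have "real (w k) \<le> real (Max {w j | j. j < i'})" if "k < i'" for i'
  proof -
    have "{w j | j. j < i'} = w ` {..<i'}"
      by auto
    then show ?thesis
      using that by simp
  qed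
  then show ?thesis
    using assms by (auto simp: Gamma_summand_def Let_def le_max_iff_disj)
qed

lemma Gamma_summand_pair_ge:
  assumes "N \<ge> 0" "0 < r" "i \<le> r" "j \<le> r" "real s - real r \<le> \<delta>"
    and weight: "\<forall>k<r. real (w k) \<le> N / 2 * ((real s - real k) - \<delta>)"
  shows "Gamma_summand N \<delta> s r w i + Gamma_summand N \<delta> s r w j
    \<ge> N * ((real s - real (min i j)) - \<delta>)"
proof -
  have lt: "Gamma_summand N \<delta> s r w i' + Gamma_summand N \<delta> s r w j'
      \<ge> N * ((real s - real i') - \<delta>)" if "i' < j'" "j' \<le> r" for i' j'
    using that Gamma_summand_ge_diff[of i'] Gamma_summand_ge_weight[of i' j'] by linarith
  consider "i < j" | "j < i" | "i = j" "i < r" | "i = j" "i = r"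
    using assms(3) by linarith
  then show ?thesis
  proof cases
    case 1
    then show ?thesis using lt assms(4) by simp
  next
    case 2
    then show ?thesis using lt[of j i] assms(3) by simp
  next
    case 3
    then show ?thesis using Gamma_summand_ge_diff[of i] weight by force
  next
    case 4
    have "N * ((real s - real r) - \<delta>) \<le> 0"
      using assms(1,5) by (simp add: mult_nonneg_nonpos)
    then show ?thesis
      using 4 by (simp add: Gamma_summand_def)
  qed
qed

end

lemma sum_by_levels:
  fixes f :: "'a \<Rightarrow> nat" and g :: "nat \<Rightarrow> 'a \<Rightarrow> 'b::comm_monoid_add"
  assumes "finite T" "\<forall>a\<in>T. f a \<le> k"
  shows "(\<Sum>a\<in>T. g (f a) a)
    = (\<Sum>i<k. \<Sum>a\<in>{a\<in>T. f a = i}. g i a) + (\<Sum>a\<in>{a\<in>T. f a = k}. g k a)"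
proof -
  have "(\<Sum>a\<in>T. g (f a) a) = (\<Sum>i<Suc k. \<Sum>a\<in>{a\<in>T. f a = i}. g (f a) a)"
    using assms by (intro sum.group[symmetric]) auto
  also have "\<dots> = (\<Sum>i<Suc k. \<Sum>a\<in>{a\<in>T. f a = i}. g i a)"
    by (intro sum.cong) auto
  finally show ?thesis
    by (simp add: add.commute)
qed

lemma Gamma_eq_sum_Gamma_summand:
  assumes "finite T" "0 < r"
  shows "Gamma T m s d l r w h P =
    (\<Sum>a\<in>T. Gamma_summand (real (card T) powi (int m - 1)) ((real d - real l) / real (card T))
              s (nat r) (w a) (agree_order h P (nat r) a))"
  (is "_ = (\<Sum>a\<in>T. ?G a (agree_order h P (nat r) a))")
proof -
  have "(\<Sum>a\<in>T. ?G a (agree_order h P (nat r) a))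
      = (\<Sum>i<nat r. \<Sum>a\<in>A_set T h P (nat r) i. ?G a i)
        + (\<Sum>a\<in>A_set T h P (nat r) (nat r). ?G a (nat r))"
    unfolding A_set_def
    by (rule sum_by_levels[where f = "agree_order h P (nat r)" and g = "\<lambda>i a. ?G a i", OF assms(1)])
      (simp add: agree_order_le)
  then show ?thesis
    using assms(2) by (simp add: Gamma_def Gamma_summand_def Let_def)
qed

lemma Gamma_add_Gamma_ge_sum_min:
  fixes d l s m n :: nat and T :: "'a::field set" and r :: int and w :: "'a \<Rightarrow> nat \<Rightarrow> nat"
  defines "N \<equiv> real n powi (int m - 1)" and "\<delta> \<equiv> (real d - real l) / real n"
  assumes "finite T" "card T = n" "0 < r" "real s - real (nat r) \<le> \<delta>"
    and "\<forall>a\<in>T. \<forall>i::nat. int i < r \<longrightarrow> real (w a i) \<le> N / 2 * ((real s - real i) - \<delta>)"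
  shows "Gamma T m s d l r w h Q + Gamma T m s d l r w h R
    \<ge> real n * N * (real s - \<delta>)
      - N * real (\<Sum>a\<in>T. min (agree_order h Q (nat r) a) (agree_order h R (nat r) a))"
proof -
  let ?G = "\<lambda>a. Gamma_summand N \<delta> s (nat r) (w a)"
  let ?k = "\<lambda>a. min (agree_order h Q (nat r) a) (agree_order h R (nat r) a)"
  have "N \<ge> 0"
    unfolding N_def by simp
  have "real n * N * (real s - \<delta>) - N * real (\<Sum>a\<in>T. ?k a)
      = (\<Sum>a\<in>T. N * (real s - \<delta>) - N * real (?k a))"
    by (simp add: assms(4) sum_subtractf sum_distrib_left)
  also have "\<dots> = (\<Sum>a\<in>T. N * ((real s - real (?k a)) - \<delta>))"
    by (simp add: algebra_simps)
  also have "\<dots> \<le> (\<Sum>a\<in>T. ?G a (agree_order h Q (nat r) a) + ?G a (agree_order h R (nat r) a))"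
    using \<open>N \<ge> 0\<close> assms(5-7) by (intro sum_mono Gamma_summand_pair_ge agree_order_le) auto
  also have "\<dots> = Gamma T m s d l r w h Q + Gamma T m s d l r w h R"
    using assms(3-5) by (simp add: Gamma_eq_sum_Gamma_summand N_def \<delta>_def sum.distrib)
  finally show ?thesis .
qed

lemma Gamma_add_Gamma_ge:
  fixes d l s m n :: nat and T :: "'a::field set" and r :: int and w :: "'a \<Rightarrow> nat \<Rightarrow> nat"
  defines "N \<equiv> real n powi (int m - 1)" and "\<delta> \<equiv> (real d - real l) / real n"
  assumes "finite T" "card T = n" "T \<noteq> {}" "0 < r" "real s - real (nat r) \<le> \<delta>"
    and "\<forall>a\<in>T. \<forall>i::nat. int i < r \<longrightarrow> real (w a i) \<le> N / 2 * ((real s - real i) - \<delta>)"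
    and "(\<Sum>a\<in>T. min (agree_order h Q (nat r) a) (agree_order h R (nat r) a)) \<le> l"
  shows "Gamma T m s d l r w h Q + Gamma T m s d l r w h R \<ge> real n ^ m * (real s - real d / real n)"
proof -
  have "n > 0"
    using assms(3-5) by auto
  have "real n ^ m = real n * N"
    using \<open>n > 0\<close> power_int_add_1[of "real n" "int m - 1"] by (simp add: N_def mult.commute)
  then have "real n ^ m * (real s - real d / real n) = real n * N * (real s - \<delta>) - N * real l"
    using \<open>n > 0\<close> by (simp add: \<delta>_def field_simps)
  moreover have "N * real (\<Sum>a\<in>T. min (agree_order h Q (nat r) a) (agree_order h R (nat r) a)) \<le> N * real l"
    unfolding N_def by (intro mult_left_mono of_nat_mono assms(9)) simp
  ultimately show ?thesis
    using Gamma_add_Gamma_ge_sum_min[OF assms(3,4,6) assms(7,8)[unfolded N_def \<delta>_def], of h Q R]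
    unfolding N_def \<delta>_def by linarith
qed

theorem lemma8p3:
  fixes d l s m :: nat and T :: "'a::field set" and n :: nat and r :: int
    and Q R :: "'a poly" and h :: "'a \<Rightarrow> 'a poly" and w :: "'a \<Rightarrow> nat \<Rightarrow> nat"
  assumes "d \<ge> l"
    and "finite T" and "T \<noteq> {}" and "card T = n"
    and "r = int s - \<lfloor>(real d - real l) / real n\<rfloor>"
    and "degree Q \<le> l" and "degree R \<le> l"
    and "\<forall>a\<in>T. h a = 0 \<or> int (degree (h a)) < r"
    and "\<forall>a\<in>T. \<forall>i::nat. int i < r \<longrightarrow>
           real (w a i) \<le> real n powi (int m - 1) / 2 * ((real s - real i) - (real d - real l) / real n)"
    and "Q \<noteq> R"
  shows "Gamma T m s d l r w h Q + Gamma T m s d l r w h R \<ge> real n ^ m * (real s - real d / real n)"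
proof (cases "0 < r")
  case False
  then have "real s \<le> (real d - real l) / real n"
    using assms(5) by linarith
  also have "\<dots> \<le> real d / real n"
    by (simp add: divide_right_mono)
  finally have "real s - real d / real n \<le> 0"
    by simp
  then show ?thesis
    using False by (simp add: Gamma_def mult_nonneg_nonpos)
next
  case True
  have "real s - real (nat r) \<le> (real d - real l) / real n"
    using assms(5) True by linarith
  moreover have "(\<Sum>a\<in>T. min (agree_order h Q (nat r) a) (agree_order h R (nat r) a)) \<le> l"
    using sum_min_agree_order_le_degree[OF assms(2,10)] degree_diff_le[OF assms(6,7)]
    by (rule order_trans)
  ultimately show ?thesis
    using Gamma_add_Gamma_ge[OF assms(2,4,3) True] assms(9) by blast
qed

end
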